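(* (1) Two elements of the taiga monoid ${\mathsf{taig}}$ lie in the same connected component of $K({\mathsf{taig}})$ if and only if they have the same evaluation. (2) For every $n\ge1$, every connected component of $K({\mathsf{taig}}_n)$ has diameter at most $n$, and some connected component has diameter at least $n-1$; hence the maximum diameter of a connected component of $K({\mathsf{taig}}_n)$ is $n-1$ or $n$.
   Context: Let $\mathcal{A}=\{1<2<3<\cdots\}$ be the ordered alphabet of positive integers and $\mathcal{A}_n=\{1<2<\cdots<n\}$. For a monoid $M$ and $s,t\in M$, write $s\sim t$ if there exist $x,y\in M$ with $s=xy$ and $t=yx$ (a cyclic shift); $\sim^*$ is the reflexive–transitive closure of $\sim$. The cyclic shift graph $K(M)$ is the undirected graph with vertex set $M$ and an edge between $s$ and $t$ iff $s\sim t$; its connected components are the $\sim^*$-classes, and distances/diameters are graph distances in $K(M)$. The evaluation of a word $w$ is the tuple $(|w|_a)_{a}$ giving the number of occurrences of each letter $a$; all monoids considered are defined by presentations whose defining relations preserve evaluation, so the evaluation of an element is well defined, and $s\equiv_{\mathrm{ev}} t$ means $s$ and $t$ have the same evaluation. The taiga monoid ${\mathsf{taig}}$ is $\mathcal{A}^*$ modulo the congruence generated by the relations $cavb=acvb$ (letters $a\le b<c$, $v\in\mathcal{A}^*$) together with $bavb=abvb$ (letters $a,b$, $v\in\mathcal{A}^*$); ${\mathsf{taig}}_n$ is defined by the same relations restricted to $\mathcal{A}_n$. Equivalently, two words are equal in ${\mathsf{taig}}$ iff right-to-left insertion of their letters into a binary search tree with multiplicities (each label occurs at most once, left subtree labels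 smaller, right subtree labels larger, and inserting an existing label increments its multiplicity) gives the same tree. *)

theory Defs
  imports Main "HOL-Library.Multiset" "HOL-Library.Extended_Nat"
begin

inductive taig_step :: "nat list \<Rightarrow> nat list \<Rightarrow> bool" where
  rel1: "a \<le> b \<Longrightarrow> b < c \<Longrightarrow>
     taig_step (p @ [c, a] @ v @ [b] @ q) (p @ [a, c] @ v @ [b] @ q)"
| rel2: "taig_step (p @ [b, a] @ v @ [b] @ q) (p @ [a, b] @ v @ [b] @ q)"

definition taig_eq :: "nat set \<Rightarrow> nat list \<Rightarrow> nat list \<Rightarrow> bool" where
  "taig_eq A = (\<lambda>x y. x \<in> lists A \<and> y \<in> lists A \<and> (taig_step x y \<or> taig_step y x))\<^sup>*\<^sup>*"

text \<open>Element of the monoid represented by a word (its congruence class).\<close>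
definition cls :: "nat set \<Rightarrow> nat list \<Rightarrow> nat list set" where
  "cls A u = {v \<in> lists A. taig_eq A u v}"

definition Alph :: "nat set" where "Alph = {a. 1 \<le> a}"
definition Alph_n :: "nat \<Rightarrow> nat set" where "Alph_n n = {1..n}"

definition K_vert :: "nat set \<Rightarrow> nat list set set" where
  "K_vert A = {cls A u | u. u \<in> lists A}"

text \<open>Edges of K(M): s ~ t iff s = xy and t = yx for some x, y in M
 (product of classes is the class of the concatenation).\<close>
definition K_edge :: "nat set \<Rightarrow> nat list set \<Rightarrow> nat list set \<Rightarrow> bool" where
  "K_edge A s t = (\<exists>x\<in>lists A. \<exists>y\<in>lists A. s = cls A (x @ y) \<and> t = cls A (y @ x))"

definition K_conn :: "nat set \<Rightarrow> nat list set \<Rightarrow> nat list set \<Rightarrow> bool" where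
  "K_conn A = (K_edge A)\<^sup>*\<^sup>*"

definition K_dist :: "nat set \<Rightarrow> nat list set \<Rightarrow> nat list set \<Rightarrow> enat" where
  "K_dist A s t = (if \<exists>k. (K_edge A ^^ k) s t
     then enat (LEAST k. (K_edge A ^^ k) s t) else \<infinity>)"

definition comp_diam :: "nat set \<Rightarrow> nat list set \<Rightarrow> enat" where
  "comp_diam A s = (SUP p \<in> {(t, u). K_conn A s t \<and> K_conn A s u}. K_dist A (fst p) (snd p))"

end

theory Submission
  imports Defs
begin

text \<open>
  Two adjacent letters may be exchanged in the taiga monoid exactly when some letter lying
  (weakly) between them occurs further to the right; this symmetric description shows that
  reversing the order of the alphabet is a symmetry of the congruence.

  Connectedness and the upper bound on the diameter are proved by induction on the number of
  distinct letters. Let lo and hi be the smallest and largest letter of a word. The inner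
  letters (those strictly between lo and hi) of two words with the same evaluation form words
  with two distinct letters fewer, which by induction are joined by a path of that length, and
  every step of that path lifts to a cyclic shift of the whole word. For words whose inner letters are congruent to a fixed word c,
  one further cyclic shift reaches a word R hi^i lo^j U, where R and U depend only on c, so two
  such words with the same evaluation have a common neighbour. This adds two steps.

  For the lower bound, the number of values k such that k + 1 occurs to the left of k in a
  permutation of 1..n is invariant under the congruence (two letters can only be exchanged
  when a third letter lies between them) and changes by at most one under a cyclic shift.
  It is 0 for 12...n and n - 1 for n...21.
\<close>

section \<open>The taiga congruence is generated by witnessed swaps\<close>

definition taig_cong :: "nat list \<Rightarrow> nat list \<Rightarrow> bool" (infix "\<approx>" 50) where
  "u \<approx> v \<longleftrightarrow> (symclp taig_step)\<^sup>*\<^sup>* u v"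

definition swappable :: "nat \<Rightarrow> nat \<Rightarrow> nat list \<Rightarrow> bool" where
  "swappable x y q \<longleftrightarrow> x = y \<or> (\<exists>b\<in>set q. min x y \<le> b \<and> b \<le> max x y)"

definition swap_step :: "nat list \<Rightarrow> nat list \<Rightarrow> bool" where
  "swap_step w w' \<longleftrightarrow> (\<exists>p x y q. w = p @ [x, y] @ q \<and> w' = p @ [y, x] @ q \<and> swappable x y q)"

lemma swappable_commute: "swappable x y q \<longleftrightarrow> swappable y x q"
  by (auto simp: swappable_def min_def max_def)

lemma swappable_mono: "swappable x y q \<Longrightarrow> set q \<subseteq> set q' \<Longrightarrow> swappable x y q'"
  by (auto simp: swappable_def)

lemma swappable_by: "b \<in> set q \<Longrightarrow> min x y \<le> b \<Longrightarrow> b \<le> max x y \<Longrightarrow> swappable x y q"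
  by (auto simp: swappable_def)

lemma swap_step_sym: "swap_step w w' \<Longrightarrow> swap_step w' w"
  unfolding swap_step_def by (metis swappable_commute)

lemma taig_step_swap_step: "taig_step w w' \<Longrightarrow> swap_step w w'"
proof (induction rule: taig_step.induct)
  case (rel1 a b c p v q)
  then show ?case unfolding swap_step_def
    by (intro exI[of _ p] exI[of _ c] exI[of _ a] exI[of _ "v @ [b] @ q"]) (auto simp: swappable_def)
next
  case (rel2 p b a v q)
  then show ?case unfolding swap_step_def
    by (intro exI[of _ p] exI[of _ b] exI[of _ a] exI[of _ "v @ [b] @ q"]) (auto simp: swappable_def)
qed

lemma swap_step_taig_step: "swap_step w w' \<Longrightarrow> (symclp taig_step)\<^sup>=\<^sup>= w w'"
proof -
  assume "swap_step w w'"
  then obtain p x y q where w: "w = p @ [x, y] @ q" "w' = p @ [y, x] @ q" and "swappable x y q"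
    by (auto simp: swap_step_def)
  show ?thesis
  proof (cases "x = y")
    case False
    then obtain b where b: "b \<in> set q" "min x y \<le> b" "b \<le> max x y"
      using \<open>swappable x y q\<close> by (auto simp: swappable_def)
    then obtain v r where q: "q = v @ [b] @ r" by (metis append_Cons append_Nil split_list)
    have "taig_step (p @ [max x y, min x y] @ v @ [b] @ r) (p @ [min x y, max x y] @ v @ [b] @ r)"
    proof (cases "b = max x y")
      case True
      then show ?thesis using taig_step.rel2[of p "max x y" "min x y" v r] by simp
    next
      case False
      then show ?thesis using b False by (intro taig_step.rel1) auto
    qed
    then have "taig_step (p @ [max x y, min x y] @ q) (p @ [min x y, max x y] @ q)"
      by (simp add: q)
    then show ?thesis
      using w False by (cases "x < y") (auto simp: min_def max_def symclp_def)
  qed (use w in simp)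
qed

lemma taig_cong_iff_swaps: "u \<approx> v \<longleftrightarrow> swap_step\<^sup>*\<^sup>* u v"
proof
  show "swap_step\<^sup>*\<^sup>* u v" if "u \<approx> v"
    using that unfolding taig_cong_def
    by (rule rtranclp_mono[THEN predicate2D, rotated])
      (use taig_step_swap_step swap_step_sym in \<open>auto simp: symclp_def\<close>)
  show "u \<approx> v" if "swap_step\<^sup>*\<^sup>* u v"
  proof -
    have "(symclp taig_step)\<^sup>=\<^sup>=\<^sup>*\<^sup>* u v"
      using that by (rule rtranclp_mono[THEN predicate2D, rotated]) (auto dest: swap_step_taig_step)
    then show ?thesis by (simp add: taig_cong_def)
  qed
qed

lemma taig_cong_refl [simp]: "u \<approx> u"
  by (simp add: taig_cong_def)

lemma taig_cong_sym: "u \<approx> v \<Longrightarrow> v \<approx> u"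
  using symp_rtranclp_symclp[of taig_step] unfolding taig_cong_def by (blast dest: sympD)

lemma taig_cong_trans [trans]: "u \<approx> v \<Longrightarrow> v \<approx> w \<Longrightarrow> u \<approx> w"
  unfolding taig_cong_def by (rule rtranclp_trans)

lemma swap_letters: "swappable x y q \<Longrightarrow> p @ [x, y] @ q \<approx> p @ [y, x] @ q"
  unfolding taig_cong_iff_swaps swap_step_def by blast

lemma swap_step_mset: "swap_step u v \<Longrightarrow> mset u = mset v"
  by (auto simp: swap_step_def)

lemma taig_cong_mset: "u \<approx> v \<Longrightarrow> mset u = mset v"
  unfolding taig_cong_iff_swaps by (induction rule: rtranclp_induct) (auto dest: swap_step_mset)

lemma taig_cong_set: "u \<approx> v \<Longrightarrow> set u = set v"
  by (metis taig_cong_mset set_mset_mset)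

lemma swap_letter_block:
  "\<forall>b\<in>set Y. swappable a b q \<Longrightarrow> p @ [a] @ Y @ q \<approx> p @ Y @ [a] @ q"
proof (induction Y arbitrary: p)
  case Nil
  then show ?case by simp
next
  case (Cons b Y)
  have "p @ [a] @ (b # Y) @ q \<approx> (p @ [b]) @ [a] @ Y @ q"
    using swap_letters[of a b "Y @ q" p] swappable_mono[of a b q "Y @ q"] Cons.prems by simp
  also have "\<dots> \<approx> (p @ [b]) @ Y @ [a] @ q"
    using Cons.IH[of "p @ [b]"] Cons.prems by simp
  finally show ?case by simp
qed

lemma swap_blocks:
  "\<forall>a\<in>set X. \<forall>b\<in>set Y. swappable a b q \<Longrightarrow> p @ X @ Y @ q \<approx> p @ Y @ X @ q"
proof (induction X arbitrary: p)
  case Nil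
  then show ?case by simp
next
  case (Cons a X)
  have "p @ (a # X) @ Y @ q \<approx> (p @ [a]) @ Y @ X @ q"
    using Cons.IH[of "p @ [a]"] Cons.prems by simp
  also have "\<dots> \<approx> p @ Y @ [a] @ X @ q"
    using swap_letter_block[of Y a "X @ q" p] swappable_mono[of a _ q "X @ q"] Cons.prems by simp
  finally show ?case by simp
qed

lemma partition_segment:
  assumes "\<forall>x\<in>set A. \<forall>y\<in>set A. Q x \<longrightarrow> \<not> Q y \<longrightarrow> swappable y x q"
  shows "p @ A @ q \<approx> p @ filter Q A @ filter (\<lambda>x. \<not> Q x) A @ q"
  using assms
proof (induction A arbitrary: p)
  case Nil
  then show ?case by simp
next
  case (Cons a A)
  have "p @ (a # A) @ q \<approx> (p @ [a]) @ filter Q A @ filter (\<lambda>x. \<not> Q x) A @ q"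
    using Cons.IH[of "p @ [a]"] Cons.prems by simp
  also have "\<dots> \<approx> p @ filter Q (a # A) @ filter (\<lambda>x. \<not> Q x) (a # A) @ q"
  proof (cases "Q a")
    case False
    then have "p @ [a] @ filter Q A @ (filter (\<lambda>x. \<not> Q x) A @ q)
        \<approx> p @ filter Q A @ [a] @ (filter (\<lambda>x. \<not> Q x) A @ q)"
      using Cons.prems swappable_mono[of a _ q "filter (\<lambda>x. \<not> Q x) A @ q"]
      by (intro swap_letter_block) auto
    then show ?thesis using False by simp
  qed simp
  finally show ?case .
qed

lemma sort_outer_letters:
  assumes "set D \<subseteq> {lo, hi}" "b \<in> set q" "lo \<le> b" "b \<le> hi"
  shows "\<exists>i j. p @ D @ q \<approx> p @ replicate i hi @ replicate j lo @ q"
proof -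
  have "p @ D @ q \<approx> p @ filter (\<lambda>z. z = hi) D @ filter (\<lambda>z. z \<noteq> hi) D @ q"
    using assms by (intro partition_segment) (auto intro!: swappable_by[OF assms(2)])
  moreover have "filter (\<lambda>z. z = hi) D = replicate (length (filter (\<lambda>z. z = hi) D)) hi"
    by (simp add: replicate_length_same)
  moreover have "filter (\<lambda>z. z \<noteq> hi) D = replicate (length (filter (\<lambda>z. z \<noteq> hi) D)) lo"
    using assms(1) by (intro replicate_length_same[symmetric]) auto
  ultimately show ?thesis by metis
qed

definition cyclic_shift :: "nat list \<Rightarrow> nat list \<Rightarrow> bool" where
  "cyclic_shift u v \<longleftrightarrow> (\<exists>x y. u \<approx> x @ y \<and> v \<approx> y @ x)"

lemma cyclic_shift_rotate: "cyclic_shift (x @ y) (y @ x)"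
  unfolding cyclic_shift_def using taig_cong_refl by blast

lemma cyclic_shift_refl [simp]: "cyclic_shift u u"
  using cyclic_shift_rotate[of "[]" u] by simp

lemma cyclic_shift_sym: "cyclic_shift u v \<Longrightarrow> cyclic_shift v u"
  unfolding cyclic_shift_def by blast

lemma cyclic_shift_cong:
  "u \<approx> u' \<Longrightarrow> v \<approx> v' \<Longrightarrow> cyclic_shift u' v' \<Longrightarrow> cyclic_shift u v"
  unfolding cyclic_shift_def by (meson taig_cong_trans)

lemma taig_cong_cyclic_shift: "u \<approx> v \<Longrightarrow> cyclic_shift u v"
  unfolding cyclic_shift_def by (metis append_Nil append_Nil2 taig_cong_refl taig_cong_sym)

lemma taig_cong_cyclic_shift_left: "u \<approx> u' \<Longrightarrow> cyclic_shift u' v \<Longrightarrow> cyclic_shift u v"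
  using cyclic_shift_cong taig_cong_refl by blast

lemma cyclic_shift_taig_cong_right: "cyclic_shift u v \<Longrightarrow> v \<approx> v' \<Longrightarrow> cyclic_shift u v'"
  using cyclic_shift_cong taig_cong_refl taig_cong_sym by blast

lemma cyclic_shift_mset: "cyclic_shift u v \<Longrightarrow> mset u = mset v"
  unfolding cyclic_shift_def by (metis taig_cong_mset mset_append union_commute)

lemma cyclic_shift_path_mset: "(cyclic_shift ^^ k) u v \<Longrightarrow> mset u = mset v"
  by (induction k arbitrary: v) (auto elim: relpowp_Suc_E dest: cyclic_shift_mset)

lemma cyclic_shift_path_refl: "(cyclic_shift ^^ k) u u"
  by (induction k) (auto intro: relpowp_Suc_I)

section \<open>Reversing the order of the alphabet\<close>

definition reflect :: "nat \<Rightarrow> nat list \<Rightarrow> nat list" where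
  "reflect K w = map (\<lambda>z. K - z) w"

lemma reflect_simps [simp]:
  "reflect K [] = []" "reflect K (a # w) = (K - a) # reflect K w"
  "reflect K (u @ w) = reflect K u @ reflect K w" "reflect K (replicate n a) = replicate n (K - a)"
  "set (reflect K w) = (\<lambda>z. K - z) ` set w"
  by (simp_all add: reflect_def)

lemma reflect_reflect: "\<forall>z\<in>set w. z \<le> K \<Longrightarrow> reflect K (reflect K w) = w"
  by (induction w) auto

lemma swappable_reflect:
  assumes "swappable x y q" "x \<le> K" "y \<le> K" "\<forall>b\<in>set q. b \<le> K"
  shows "swappable (K - x) (K - y) (reflect K q)"
proof (cases "x = y")
  case False
  then obtain b where b: "b \<in> set q" "min x y \<le> b" "b \<le> max x y"
    using assms(1) by (auto simp: swappable_def)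
  then have "b \<le> K"
    using assms(4) by blast
  then show ?thesis
    using assms(2,3) b by (intro swappable_by[of "K - b"]) (auto simp: min_def max_def split: if_splits)
qed (simp add: swappable_def)

lemma taig_cong_reflect:
  assumes "u \<approx> v" "\<forall>z\<in>set u. z \<le> K"
  shows "reflect K u \<approx> reflect K v"
  using assms(1)[unfolded taig_cong_iff_swaps]
proof (induction rule: rtranclp_induct)
  case (step w w')
  then obtain p x y q where w: "w = p @ [x, y] @ q" "w' = p @ [y, x] @ q" "swappable x y q"
    by (auto simp: swap_step_def)
  have "set w = set u"
    using step.hyps(1) taig_cong_set taig_cong_iff_swaps by metis
  then have "\<forall>z\<in>set w. z \<le> K"
    using assms(2) by simp
  then have "swappable (K - x) (K - y) (reflect K q)"
    using swappable_reflect[OF w(3)] w(1) by simp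
  then have "reflect K w \<approx> reflect K w'"
    using swap_letters[of "K - x" "K - y" "reflect K q" "reflect K p"] w by simp
  then show ?case using step.IH taig_cong_trans by blast
qed simp

lemma cyclic_shift_reflect:
  assumes "cyclic_shift u v" "\<forall>z\<in>set u. z \<le> K"
  shows "cyclic_shift (reflect K u) (reflect K v)"
proof -
  obtain x y where xy: "u \<approx> x @ y" "v \<approx> y @ x"
    using assms(1) by (auto simp: cyclic_shift_def)
  have "\<forall>z\<in>set v. z \<le> K"
    using assms(2) taig_cong_set[OF xy(1)] taig_cong_set[OF xy(2)] by auto
  then show ?thesis
    using taig_cong_reflect[OF xy(1) assms(2)] taig_cong_reflect[OF xy(2)]
    unfolding cyclic_shift_def by auto
qed

section \<open>Lifting through the inner letters\<close>

definition inner :: "nat \<Rightarrow> nat \<Rightarrow> nat \<Rightarrow> bool" where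
  "inner lo hi z \<longleftrightarrow> lo < z \<and> z < hi"

lemma outer_letters: "set w \<subseteq> {lo..hi} \<Longrightarrow> set (filter (\<lambda>z. \<not> inner lo hi z) w) \<subseteq> {lo, hi}"
  by (auto simp: inner_def)

lemma no_inner_letters: "set w \<subseteq> {lo..hi} \<Longrightarrow> filter (inner lo hi) w = [] \<Longrightarrow> set w \<subseteq> {lo, hi}"
  using outer_letters[of w lo hi] by (metis filter_False filter_True filter_empty_conv)

lemma filter_eq_appendD:
  "filter P w = xs @ ys \<Longrightarrow> \<exists>A B. w = A @ B \<and> filter P A = xs \<and> filter P B = ys"
proof (induction xs arbitrary: w)
  case Nil
  then show ?case by (intro exI[of _ "[]"] exI[of _ w]) auto
next
  case (Cons x xs)
  then obtain us vs where uv: "w = us @ x # vs" "\<forall>u\<in>set us. \<not> P u" "P x"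
      "filter P vs = xs @ ys"
    using filter_eq_ConsD[of P w x "xs @ ys"] by auto
  then obtain A B where "vs = A @ B" "filter P A = xs" "filter P B = ys"
    using Cons.IH[OF uv(4)] by auto
  with uv show ?case
    by (intro exI[of _ "us @ x # A"] exI[of _ B]) (simp add: filter_empty_conv)
qed

lemma filter_eq_append_ConsD:
  "filter P w = xs @ a # ys \<Longrightarrow> \<exists>A B. w = A @ a # B \<and> filter P A = xs \<and> filter P B = ys"
proof -
  assume "filter P w = xs @ a # ys"
  then obtain A B where AB: "w = A @ B" "filter P A = xs" "filter P B = a # ys"
    using filter_eq_appendD[of P w xs "a # ys"] by auto
  then obtain us vs where "B = us @ a # vs" "\<forall>u\<in>set us. \<not> P u" "ys = filter P vs"
    using filter_eq_ConsD[OF AB(3)] by auto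
  with AB show ?thesis
    by (intro exI[of _ "A @ us"] exI[of _ vs]) (simp add: filter_empty_conv)
qed

lemma join_inner_pair:
  assumes "set E \<subseteq> {lo, hi}" "inner lo hi x" "inner lo hi y"
    and b: "b \<in> set Q" "min x y \<le> b" "b \<le> max x y"
  shows "\<exists>L R. set (L @ R) \<subseteq> {lo, hi} \<and> p @ [x] @ E @ [y] @ Q \<approx> p @ L @ [x, y] @ R @ Q"
proof -
  have outer: "swappable e f (y # Q')" if "e \<in> {lo, hi}" "f \<in> {lo, hi}" "e \<noteq> f" for e f Q'
    using that assms(3) by (intro swappable_by[of y]) (auto simp: inner_def)
  have by_b: "swappable e y Q" if "min e y \<le> b" "b \<le> max e y" for e
    using that b by (intro swappable_by[of b]) auto
  \<comment> \<open>If x \<le> y, the hi-letters of E move in front of x (witness y) and the lo-letters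
    behind y (witness b); symmetrically if y < x.\<close>
  define l where "l = (if x \<le> y then hi else lo)"
  define L where "L = filter (\<lambda>z. z = l) E"
  define R where "R = filter (\<lambda>z. z \<noteq> l) E"
  have lohi: "lo < x" "x < hi" "lo < y" "y < hi"
    using assms(2,3) by (auto simp: inner_def)
  have "(p @ [x]) @ E @ ([y] @ Q) \<approx> (p @ [x]) @ L @ R @ ([y] @ Q)"
    unfolding L_def R_def using assms(1) lohi
    by (intro partition_segment[where Q = "\<lambda>z. z = l", simplified]) (auto simp: l_def intro!: outer)
  then have "p @ [x] @ E @ [y] @ Q \<approx> (p @ [x]) @ L @ R @ ([y] @ Q)"
    by simp
  also have "\<dots> = p @ [x] @ L @ (R @ [y] @ Q)"
    by simp
  also have "\<dots> \<approx> p @ L @ [x] @ (R @ [y] @ Q)"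
    unfolding L_def using lohi by (intro swap_blocks) (auto simp: l_def intro!: swappable_by[of y])
  also have "\<dots> = (p @ L @ [x]) @ R @ [y] @ Q"
    by simp
  also have "\<dots> \<approx> (p @ L @ [x]) @ [y] @ R @ Q"
    unfolding R_def using assms(1) lohi b
    by (intro swap_blocks) (auto simp: l_def intro!: by_b split: if_splits)
  finally show ?thesis
    using assms(1) unfolding L_def R_def by (intro exI[of _ L] exI[of _ R]) (auto simp: L_def R_def)
qed

lemma lift_swap:
  assumes "set w \<subseteq> {lo..hi}" "filter (inner lo hi) w = p @ [x, y] @ q" "swappable x y q"
  shows "\<exists>w'. w \<approx> w' \<and> filter (inner lo hi) w' = p @ [y, x] @ q"
proof (cases "x = y")
  case False
  then obtain b where b: "b \<in> set q" "min x y \<le> b" "b \<le> max x y"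
    using assms(3) by (auto simp: swappable_def)
  obtain P W where PW: "w = P @ x # W" "filter (inner lo hi) P = p"
      "filter (inner lo hi) W = [] @ y # q"
    using filter_eq_append_ConsD[of "inner lo hi" w p x "y # q"] assms(2) by auto
  then obtain E Q where EQ: "W = E @ y # Q" "filter (inner lo hi) E = []"
      "filter (inner lo hi) Q = q"
    using filter_eq_append_ConsD[OF PW(3)] by auto
  have "x \<in> set (filter (inner lo hi) w)" "y \<in> set (filter (inner lo hi) w)"
    using assms(2) by simp_all
  then have xy: "inner lo hi x" "inner lo hi y"
    by simp_all
  have "set E \<subseteq> {lo..hi}"
    using assms(1) PW(1) EQ(1) by auto
  then have "set E \<subseteq> {lo, hi}"
    using EQ(2) by (rule no_inner_letters)
  moreover have bQ: "b \<in> set Q"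
    using b(1) EQ(3) by auto
  ultimately obtain L R where LR: "set (L @ R) \<subseteq> {lo, hi}"
      "P @ [x] @ E @ [y] @ Q \<approx> P @ L @ [x, y] @ R @ Q"
    using join_inner_pair[OF _ xy bQ b(2,3), of E P] by blast
  have "P @ L @ [x, y] @ R @ Q \<approx> P @ L @ [y, x] @ R @ Q"
    using swap_letters[of x y "R @ Q" "P @ L"] swappable_by[of b "R @ Q" x y] b(2,3) bQ by simp
  then have "w \<approx> P @ L @ [y, x] @ R @ Q"
    using LR(2) PW(1) EQ(1) by (simp add: taig_cong_trans)
  moreover have "filter (inner lo hi) L = []" "filter (inner lo hi) R = []"
    using LR(1) by (auto simp: filter_empty_conv inner_def)
  ultimately show ?thesis
    using PW(2) EQ(3) xy by (intro exI[of _ "P @ L @ [y, x] @ R @ Q"]) simp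
qed (use assms in \<open>intro exI[of _ w], simp\<close>)

lemma lift_taig_cong:
  assumes "filter (inner lo hi) w \<approx> c" "set w \<subseteq> {lo..hi}"
  shows "\<exists>w'. w \<approx> w' \<and> filter (inner lo hi) w' = c"
  using assms(1)[unfolded taig_cong_iff_swaps]
proof (induction rule: rtranclp_induct)
  case (step c1 c2)
  then obtain w1 where w1: "w \<approx> w1" "filter (inner lo hi) w1 = c1"
    by blast
  obtain p x y q where "c1 = p @ [x, y] @ q" "c2 = p @ [y, x] @ q" "swappable x y q"
    using step.hyps(2) by (auto simp: swap_step_def)
  moreover have "set w1 \<subseteq> {lo..hi}"
    using assms(2) taig_cong_set[OF w1(1)] by simp
  ultimately show ?case
    using lift_swap[of w1 lo hi p x y q] w1 by (auto intro: taig_cong_trans)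
qed (use taig_cong_refl in blast)

lemma lift_cyclic_shift:
  assumes "cyclic_shift c c'" "set w \<subseteq> {lo..hi}" "filter (inner lo hi) w \<approx> c"
  shows "\<exists>w'. cyclic_shift w w' \<and> set w' \<subseteq> {lo..hi} \<and> filter (inner lo hi) w' \<approx> c'"
proof -
  obtain x y where xy: "c \<approx> x @ y" "c' \<approx> y @ x"
    using assms(1) by (auto simp: cyclic_shift_def)
  obtain w1 where w1: "w \<approx> w1" "filter (inner lo hi) w1 = x @ y"
    using lift_taig_cong[OF taig_cong_trans[OF assms(3) xy(1)] assms(2)] by blast
  then obtain X Y where XY: "w1 = X @ Y" "filter (inner lo hi) X = x" "filter (inner lo hi) Y = y"
    using filter_eq_appendD[OF w1(2)] by auto
  have "cyclic_shift w (Y @ X)"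
    using cyclic_shift_cong[OF w1(1) taig_cong_refl] cyclic_shift_rotate XY(1) by blast
  moreover have "set (Y @ X) \<subseteq> {lo..hi}"
    using assms(2) taig_cong_set[OF w1(1)] XY(1) by auto
  moreover have "filter (inner lo hi) (Y @ X) \<approx> c'"
    using XY xy(2) taig_cong_sym by auto
  ultimately show ?thesis
    by blast
qed

lemma lift_cyclic_shift_path:
  assumes "(cyclic_shift ^^ k) c c'" "set w \<subseteq> {lo..hi}" "filter (inner lo hi) w \<approx> c"
  shows "\<exists>w'. (cyclic_shift ^^ k) w w' \<and> set w' \<subseteq> {lo..hi} \<and> filter (inner lo hi) w' \<approx> c'"
  using assms(1)
proof (induction k arbitrary: c')
  case (Suc k)
  then obtain c1 where "(cyclic_shift ^^ k) c c1" "cyclic_shift c1 c'"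
    by (auto elim: relpowp_Suc_E)
  with Suc.IH obtain w1 where "(cyclic_shift ^^ k) w w1" "set w1 \<subseteq> {lo..hi}"
      "filter (inner lo hi) w1 \<approx> c1"
    by blast
  with lift_cyclic_shift[OF \<open>cyclic_shift c1 c'\<close>] show ?case
    by (meson relpowp_Suc_I)
qed (use assms in auto)

section \<open>Common neighbours\<close>

lemma filter_inner_drop_outer:
  "\<not> inner lo hi e \<Longrightarrow> filter (inner lo hi) (filter (\<lambda>z. z \<noteq> e) w) = filter (inner lo hi) w"
  by (induction w) auto

lemma separate_outer:
  assumes "set M \<subseteq> {lo..hi}" "\<forall>z\<in>set M. inner lo hi z \<longrightarrow> nu \<le> z \<and> z \<le> mu"
    "lo \<le> nu" "mu \<le> hi" "lo \<in> set M \<Longrightarrow> nu \<in> set q" "hi \<in> set M \<Longrightarrow> mu \<in> set q"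
  shows "p @ M @ q \<approx> p @ filter (inner lo hi) M @ filter (\<lambda>z. \<not> inner lo hi z) M @ q"
    and "p @ M @ q \<approx> p @ filter (\<lambda>z. \<not> inner lo hi z) M @ filter (inner lo hi) M @ q"
proof -
  have outer: "e = lo \<or> e = hi" if "e \<in> set M" "\<not> inner lo hi e" for e
    using that assms(1) by (force simp: inner_def)
  have commute: "swappable e z q" if "e \<in> set M" "\<not> inner lo hi e" "z \<in> set M" "inner lo hi z" for e z
    using outer[OF that(1,2)] assms(2-6) that
    by (auto intro: swappable_by[of nu] swappable_by[of mu] simp: inner_def)
  show "p @ M @ q \<approx> p @ filter (inner lo hi) M @ filter (\<lambda>z. \<not> inner lo hi z) M @ q"
    using commute by (intro partition_segment) blast
  show "p @ M @ q \<approx> p @ filter (\<lambda>z. \<not> inner lo hi z) M @ filter (inner lo hi) M @ q"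
    using partition_segment[of M "\<lambda>z. \<not> inner lo hi z" q p] commute swappable_commute by simp
qed

text \<open>The exponents i and j are determined by the evaluation, so two words with the same
  evaluation whose inner letters are congruent to c have a common neighbour.\<close>

definition hub_shape :: "nat \<Rightarrow> nat \<Rightarrow> nat list \<Rightarrow> nat list \<Rightarrow> nat list \<Rightarrow> bool" where
  "hub_shape lo hi c R U \<longleftrightarrow> (\<forall>z\<in>set (R @ U). inner lo hi z) \<and>
    (\<forall>x. set x \<subseteq> {lo..hi} \<longrightarrow> filter (inner lo hi) x \<approx> c \<longrightarrow>
      (\<exists>i j. cyclic_shift x (R @ replicate i hi @ replicate j lo @ U)))"

lemma hub_shapeI:
  assumes "\<forall>z\<in>set (R @ U). inner lo hi z"
    and "\<And>x. set x \<subseteq> {lo..hi} \<Longrightarrow> filter (inner lo hi) x = c \<Longrightarrow>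
      \<exists>i j. cyclic_shift x (R @ replicate i hi @ replicate j lo @ U)"
  shows "hub_shape lo hi c R U"
  unfolding hub_shape_def
proof (intro conjI allI impI)
  fix x assume x: "set x \<subseteq> {lo..hi}" "filter (inner lo hi) x \<approx> c"
  then obtain x' where x': "x \<approx> x'" "filter (inner lo hi) x' = c"
    using lift_taig_cong by blast
  moreover have "set x' \<subseteq> {lo..hi}"
    using x(1) taig_cong_set[OF x'(1)] by simp
  ultimately show "\<exists>i j. cyclic_shift x (R @ replicate i hi @ replicate j lo @ U)"
    using assms(2) cyclic_shift_cong[OF _ taig_cong_refl] by blast
qed (use assms(1) in blast)

lemma hub_shape_cong: "c \<approx> c' \<Longrightarrow> hub_shape lo hi c' R U \<Longrightarrow> hub_shape lo hi c R U"
  unfolding hub_shape_def by (meson taig_cong_trans)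

lemma hub_shape_common_neighbour:
  assumes "lo < hi" "hub_shape lo hi c R U"
    and "set x \<subseteq> {lo..hi}" "filter (inner lo hi) x \<approx> c"
    and "set y \<subseteq> {lo..hi}" "filter (inner lo hi) y \<approx> c" "mset x = mset y"
  shows "\<exists>h. cyclic_shift x h \<and> cyclic_shift y h"
proof -
  have RU: "lo \<notin> set (R @ U)" "hi \<notin> set (R @ U)"
    using assms(2) by (auto simp: hub_shape_def inner_def)
  obtain i j i' j' where ij: "cyclic_shift x (R @ replicate i hi @ replicate j lo @ U)"
    "cyclic_shift y (R @ replicate i' hi @ replicate j' lo @ U)"
    using assms(2-6) unfolding hub_shape_def by blast
  have "count (mset x) hi = i" "count (mset x) lo = j"
    "count (mset y) hi = i'" "count (mset y) lo = j'"
    using cyclic_shift_mset[OF ij(1)] cyclic_shift_mset[OF ij(2)] RU assms(1)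
    by (auto simp: count_eq_zero_iff)
  then show ?thesis
    using ij assms(7) by metis
qed

lemma hub_shape_no_inner:
  assumes "lo < hi"
  shows "hub_shape lo hi [] [] []"
proof (rule hub_shapeI)
  fix x assume x: "set x \<subseteq> {lo..hi}" "filter (inner lo hi) x = []"
  show "\<exists>i j. cyclic_shift x ([] @ replicate i hi @ replicate j lo @ [])"
  proof (cases x rule: rev_cases)
    case Nil
    then show ?thesis by (intro exI[of _ 0]) simp
  next
    case (snoc x' e)
    have letters: "set x \<subseteq> {lo, hi}"
      using no_inner_letters[OF x] .
    then obtain i j where ij: "[] @ x' @ [e] \<approx> [] @ replicate i hi @ replicate j lo @ [e]"
      using sort_outer_letters[of x' lo hi e "[e]" "[]"] assms snoc by auto
    show ?thesis
    proof (cases "e = lo")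
      case True
      then have "cyclic_shift x (replicate i hi @ replicate (Suc j) lo)"
        using taig_cong_cyclic_shift ij snoc by (simp add: replicate_append_same)
      then show ?thesis by (metis append_Nil append_Nil2)
    next
      case False
      then have "e = hi"
        using letters snoc by auto
      then have "cyclic_shift x (replicate (Suc i) hi @ replicate j lo)"
        using cyclic_shift_cong[OF _ taig_cong_refl cyclic_shift_rotate, of x "replicate i hi @ replicate j lo" "[hi]"] ij snoc
        by simp
      then show ?thesis by (metis append_Nil append_Nil2)
    qed
  qed
qed simp

lemma hub_shape_singleton:
  assumes "inner lo hi m"
  shows "hub_shape lo hi [m] [] [m]"
proof (rule hub_shapeI)
  fix x assume x: "set x \<subseteq> {lo..hi}" "filter (inner lo hi) x = [m]"
  then obtain X T where XT: "x = X @ m # T" "filter (inner lo hi) X = []" "filter (inner lo hi) T = []"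
    using filter_eq_append_ConsD[of "inner lo hi" x "[]" m "[]"] by auto
  have "set (T @ X) \<subseteq> {lo, hi}"
    using no_inner_letters[of "T @ X" lo hi] x(1) XT by auto
  then obtain i j where "[] @ (T @ X) @ [m] \<approx> [] @ replicate i hi @ replicate j lo @ [m]"
    using sort_outer_letters[of "T @ X" lo hi m "[m]" "[]"] assms by (auto simp: inner_def)
  moreover have "cyclic_shift x (T @ X @ [m])"
    using cyclic_shift_rotate[of "X @ [m]" T] XT(1) by simp
  ultimately show "\<exists>i j. cyclic_shift x ([] @ replicate i hi @ replicate j lo @ [m])"
    using cyclic_shift_cong[OF taig_cong_refl] taig_cong_sym by fastforce
qed (use assms in simp)

lemma gather_outer_before_min:
  assumes "set (B @ T @ A) \<subseteq> {lo..hi}" "hi \<notin> set (B @ A)" "filter (inner lo hi) T = []"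
    and "\<forall>z\<in>set (B @ A). inner lo hi z \<longrightarrow> nu \<le> z" "lo < nu" "nu \<le> mu" "inner lo hi mu"
  shows "\<exists>i j. B @ [mu] @ T @ A @ [nu]
    \<approx> filter (inner lo hi) B @ [mu] @ replicate i hi @ replicate j lo @ filter (inner lo hi) A @ [nu]"
proof -
  have mu: "lo < mu" "mu < hi"
    using assms(7) by (auto simp: inner_def)
  define L1 where "L1 = filter (\<lambda>z. \<not> inner lo hi z) B"
  define L2 where "L2 = filter (\<lambda>z. \<not> inner lo hi z) A"
  have "[] @ (B @ [mu]) @ (T @ A @ [nu])
      \<approx> [] @ filter (inner lo hi) (B @ [mu]) @ filter (\<lambda>z. \<not> inner lo hi z) (B @ [mu]) @ (T @ A @ [nu])"
    using assms mu by (intro separate_outer(1)[of "B @ [mu]" lo hi nu hi "T @ A @ [nu]"]) auto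
  also have "\<dots> = (filter (inner lo hi) B @ [mu] @ L1 @ T) @ A @ [nu]"
    using assms(7) by (simp add: L1_def)
  also have "\<dots> \<approx> (filter (inner lo hi) B @ [mu] @ L1 @ T) @ L2 @ filter (inner lo hi) A @ [nu]"
    unfolding L2_def using assms by (intro separate_outer(2)[of A lo hi nu hi "[nu]"]) auto
  also have "\<dots> = (filter (inner lo hi) B @ [mu]) @ (L1 @ T @ L2) @ (filter (inner lo hi) A @ [nu])"
    by simp
  also obtain i j where "\<dots> \<approx> (filter (inner lo hi) B @ [mu]) @ replicate i hi @ replicate j lo
      @ (filter (inner lo hi) A @ [nu])"
  proof -
    have "set (L1 @ T @ L2) \<subseteq> {lo, hi}"
      using outer_letters[of B lo hi] outer_letters[of A lo hi] no_inner_letters[of T lo hi] assms(1,3)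
      by (auto simp: L1_def L2_def)
    then show ?thesis
      using sort_outer_letters[of "L1 @ T @ L2" lo hi nu "filter (inner lo hi) A @ [nu]"
          "filter (inner lo hi) B @ [mu]"] that assms(5,6) mu by auto
  qed
  finally show ?thesis
    by auto
qed

lemma hub_shape_last_max:
  assumes "\<forall>z\<in>set c. inner lo hi z \<and> nu \<le> z \<and> z \<le> mu" "c = U0 @ nu # R0 @ [mu]"
  shows "hub_shape lo hi c (R0 @ [mu]) (U0 @ [nu])"
proof (rule hub_shapeI)
  fix x assume x: "set x \<subseteq> {lo..hi}" "filter (inner lo hi) x = c"
  obtain A W where AW: "x = A @ nu # W" "filter (inner lo hi) A = U0"
      "filter (inner lo hi) W = R0 @ [mu]"
    using filter_eq_append_ConsD[of "inner lo hi" x U0 nu "R0 @ [mu]"] x(2) assms(2) by auto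
  then obtain B T where BT: "W = B @ mu # T" "filter (inner lo hi) B = R0"
      "filter (inner lo hi) T = []"
    using filter_eq_append_ConsD[of "inner lo hi" W R0 mu "[]"] by auto
  have bounds: "\<forall>z\<in>set x. inner lo hi z \<longrightarrow> nu \<le> z \<and> z \<le> mu"
    using assms(1) unfolding x(2)[symmetric] by auto
  have numu: "lo < nu" "nu \<le> mu" "mu < hi" "inner lo hi mu"
    using assms by (auto simp: inner_def)
  \<comment> \<open>After the rotation the word ends with the minimum nu, which lets lo-letters but not
    hi-letters pass inner letters; so the hi-letters are first moved to the front, with
    witness mu.\<close>
  define Hs where "Hs = filter (\<lambda>z. z = hi) (A @ [nu] @ B)"
  define A' where "A' = filter (\<lambda>z. z \<noteq> hi) A"
  define B' where "B' = filter (\<lambda>z. z \<noteq> hi) B"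
  have "\<forall>e\<in>set (A @ [nu] @ B). e \<noteq> hi \<longrightarrow> swappable e hi (mu # T)"
  proof (intro ballI impI)
    fix e assume "e \<in> set (A @ [nu] @ B)" "e \<noteq> hi"
    then have "e \<in> set x" "e \<noteq> hi"
      by (auto simp: AW BT)
    then have "e \<le> mu"
      using bounds x(1) numu unfolding inner_def by fastforce
    then show "swappable e hi (mu # T)"
      using numu by (intro swappable_by[of mu]) auto
  qed
  then have "[] @ (A @ [nu] @ B) @ ([mu] @ T) \<approx> [] @ Hs @ (A' @ [nu] @ B') @ ([mu] @ T)"
    using partition_segment[of "A @ [nu] @ B" "\<lambda>z. z = hi" "[mu] @ T" "[]"] numu
    by (simp add: Hs_def A'_def B'_def)
  then have "x \<approx> (Hs @ A' @ [nu]) @ (B' @ [mu] @ T)"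
    using AW(1) BT(1) by simp
  then have shift: "cyclic_shift x ((B' @ [mu] @ T) @ (Hs @ A' @ [nu]))"
    using taig_cong_cyclic_shift_left cyclic_shift_rotate by blast
  have "filter (inner lo hi) B' = R0" "filter (inner lo hi) A' = U0"
    using filter_inner_drop_outer[of lo hi hi] AW BT by (simp_all add: A'_def B'_def inner_def)
  moreover have "set (B' @ (T @ Hs) @ A') \<subseteq> {lo..hi}" "hi \<notin> set (B' @ A')"
    "filter (inner lo hi) (T @ Hs) = []" "\<forall>z\<in>set (B' @ A'). inner lo hi z \<longrightarrow> nu \<le> z"
    using x(1) bounds AW BT by (auto simp: A'_def B'_def Hs_def inner_def)
  ultimately obtain i j where "B' @ [mu] @ (T @ Hs) @ A' @ [nu]
      \<approx> R0 @ [mu] @ replicate i hi @ replicate j lo @ U0 @ [nu]"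
    using gather_outer_before_min[of B' "T @ Hs" A' lo hi nu mu] numu by auto
  then show "\<exists>i j. cyclic_shift x ((R0 @ [mu]) @ replicate i hi @ replicate j lo @ U0 @ [nu])"
    using cyclic_shift_taig_cong_right[OF shift] by auto
qed (use assms in auto)

lemma inner_reflect: "z \<le> lo + hi \<Longrightarrow> inner lo hi (lo + hi - z) \<longleftrightarrow> inner lo hi z"
  by (auto simp: inner_def)

lemma filter_inner_reflect:
  "\<forall>z\<in>set w. z \<le> lo + hi \<Longrightarrow>
    filter (inner lo hi) (reflect (lo + hi) w) = reflect (lo + hi) (filter (inner lo hi) w)"
  by (induction w) (auto simp: inner_reflect)

lemma reflect_atLeastAtMost: "set x \<subseteq> {lo..hi} \<Longrightarrow> set (reflect (lo + hi) x) \<subseteq> {lo..hi}"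
proof
  fix z assume "set x \<subseteq> {lo..hi}" "z \<in> set (reflect (lo + hi) x)"
  then obtain y where "y \<in> set x" "z = lo + hi - y"
    by auto
  moreover have "lo \<le> y" "y \<le> hi"
    using \<open>set x \<subseteq> {lo..hi}\<close> \<open>y \<in> set x\<close> by auto
  ultimately show "z \<in> {lo..hi}"
    by auto
qed

lemma hub_shape_reflect:
  assumes "hub_shape lo hi c R U" "U \<noteq> []" "\<forall>z\<in>set c. inner lo hi z"
  shows "hub_shape lo hi (reflect (lo + hi) c) (reflect (lo + hi) R) (reflect (lo + hi) U)"
  unfolding hub_shape_def
proof (intro conjI allI impI)
  let ?r = "reflect (lo + hi)"
  have inner_le: "inner lo hi z \<Longrightarrow> z \<le> lo + hi" for z
    by (simp add: inner_def)
  show RU: "\<forall>z\<in>set (?r R @ ?r U). inner lo hi z"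
    using assms(1) inner_le inner_reflect by (auto simp: hub_shape_def)
  fix x assume x: "set x \<subseteq> {lo..hi}" "filter (inner lo hi) x \<approx> ?r c"
  have x_le: "\<forall>z\<in>set x. z \<le> lo + hi"
    using x(1) by auto
  have "filter (inner lo hi) (?r x) = ?r (filter (inner lo hi) x)"
    using filter_inner_reflect[OF x_le] .
  also have "\<dots> \<approx> ?r (?r c)"
    using taig_cong_reflect[OF x(2)] x_le by auto
  also have "?r (?r c) = c"
    using assms(3) inner_le by (intro reflect_reflect) auto
  finally obtain i j where "cyclic_shift (?r x) (R @ replicate i hi @ replicate j lo @ U)"
    using assms(1) reflect_atLeastAtMost[OF x(1)] unfolding hub_shape_def by blast
  moreover have "\<forall>z\<in>set (?r x). z \<le> lo + hi"
    by auto
  ultimately have "cyclic_shift (?r (?r x)) (?r (R @ replicate i hi @ replicate j lo @ U))"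
    using cyclic_shift_reflect by blast
  then have shift: "cyclic_shift x (?r R @ (replicate i lo @ replicate j hi) @ ?r U)"
    using reflect_reflect[OF x_le] by simp
  obtain u U' where u: "?r U = u # U'"
    using assms(2) by (cases U) auto
  then have "lo \<le> u" "u \<le> hi"
    using RU by (auto simp: inner_def)
  moreover have "set (replicate i lo @ replicate j hi) \<subseteq> {lo, hi}"
    by auto
  ultimately obtain i' j' where "?r R @ (replicate i lo @ replicate j hi) @ ?r U
      \<approx> ?r R @ replicate i' hi @ replicate j' lo @ ?r U"
    using sort_outer_letters[of "replicate i lo @ replicate j hi" lo hi u "?r U" "?r R"] u by auto
  then show "\<exists>i j. cyclic_shift x (?r R @ replicate i hi @ replicate j lo @ ?r U)"
    using cyclic_shift_taig_cong_right[OF shift] by blast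
qed

lemma min_max_adjacent:
  assumes "nu \<in> set c" "mu \<in> set c" "nu < rho" "rho < mu"
  shows "\<exists>U R. c @ [rho] \<approx> U @ [nu, mu] @ R \<and> rho \<in> set R"
proof -
  define l where "l = filter (\<lambda>z. z < rho) c"
  define r where "r = filter (\<lambda>z. \<not> z < rho) c"
  have across: "\<forall>a\<in>set L. \<forall>b\<in>set R. swappable a b q"
    if "set L \<subseteq> set l" "set R \<subseteq> set r" "rho \<in> set q" for L R q
  proof (intro ballI)
    fix a b assume "a \<in> set L" "b \<in> set R"
    then have "a < rho" "rho \<le> b"
      using that by (auto simp: l_def r_def)
    then show "swappable a b q"
      using that(3) by (intro swappable_by[of rho]) auto
  qed
  have "nu \<in> set l" "mu \<in> set r"
    using assms by (auto simp: l_def r_def)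
  then obtain l1 l2 r1 r2 where l: "l = l1 @ nu # l2" and r: "r = r1 @ mu # r2"
    by (meson split_list)
  have "[] @ c @ [rho] \<approx> [] @ l @ r @ [rho]"
    unfolding l_def r_def
  proof (rule partition_segment, intro ballI impI)
    fix a b assume "a \<in> set c" "b \<in> set c" "a < rho" "\<not> b < rho"
    then show "swappable b a [rho]"
      by (intro swappable_by[of rho]) auto
  qed
  also have "\<dots> = (l1 @ [nu]) @ l2 @ (r1 @ [mu]) @ (r2 @ [rho])"
    by (simp add: l r)
  also have "\<dots> \<approx> (l1 @ [nu]) @ (r1 @ [mu]) @ l2 @ (r2 @ [rho])"
    by (intro swap_blocks across) (auto simp: l r)
  also have "\<dots> = l1 @ [nu] @ r1 @ ([mu] @ l2 @ r2 @ [rho])"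
    by simp
  also have "\<dots> \<approx> l1 @ r1 @ [nu] @ ([mu] @ l2 @ r2 @ [rho])"
    by (intro swap_blocks across) (auto simp: l r)
  finally show ?thesis
    by (intro exI[of _ "l1 @ r1"] exI[of _ "l2 @ r2 @ [rho]"]) simp
qed

lemma gather_outer_before_min_max:
  assumes "set M \<subseteq> {lo..hi}" "\<forall>z\<in>set M. inner lo hi z \<longrightarrow> nu \<le> z \<and> z \<le> mu"
    and "lo < nu" "nu \<le> mu" "mu < hi" "set H \<subseteq> {hi}"
  shows "\<exists>i j. M @ [nu] @ H @ [mu] \<approx> filter (inner lo hi) M @ replicate i hi @ replicate j lo @ [nu, mu]"
proof -
  define L where "L = filter (\<lambda>z. \<not> inner lo hi z) M"
  have "[] @ M @ ([nu] @ H @ [mu]) \<approx> [] @ filter (inner lo hi) M @ L @ ([nu] @ H @ [mu])"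
    unfolding L_def using assms by (intro separate_outer(1)) auto
  also have "\<dots> = (filter (inner lo hi) M @ L) @ [nu] @ H @ [mu]"
    by simp
  also have "\<dots> \<approx> (filter (inner lo hi) M @ L) @ H @ [nu] @ [mu]"
    using assms(4-6) by (intro swap_blocks) (auto intro!: swappable_by[of mu])
  also obtain i j where "\<dots> \<approx> filter (inner lo hi) M @ replicate i hi @ replicate j lo @ [nu, mu]"
  proof -
    have "set (L @ H) \<subseteq> {lo, hi}"
      using outer_letters[OF assms(1)] assms(6) by (auto simp: L_def)
    then show ?thesis
      using sort_outer_letters[of "L @ H" lo hi nu "[nu, mu]" "filter (inner lo hi) M"] that assms(3-5)
      by auto
  qed
  finally show ?thesis
    by auto
qed

lemma hub_shape_inner_last:
  assumes "\<forall>z\<in>set c. inner lo hi z \<and> nu \<le> z \<and> z \<le> mu"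
    and "c \<approx> U @ [nu, mu] @ R" "R \<noteq> []"
  shows "hub_shape lo hi c (R @ U) [nu, mu]"
proof (rule hub_shape_cong[OF assms(2)], rule hub_shapeI)
  have c': "\<forall>z\<in>set (U @ [nu, mu] @ R). inner lo hi z \<and> nu \<le> z \<and> z \<le> mu"
    using assms(1) taig_cong_set[OF assms(2)] by simp
  then show "\<forall>z\<in>set ((R @ U) @ [nu, mu]). inner lo hi z"
    by auto
  have numu: "lo < nu" "nu \<le> mu" "mu < hi"
    using c' by (auto simp: inner_def)
  fix x assume x: "set x \<subseteq> {lo..hi}" "filter (inner lo hi) x = U @ [nu, mu] @ R"
  have bounds: "\<forall>z\<in>set x. inner lo hi z \<longrightarrow> nu \<le> z \<and> z \<le> mu"
    using c' unfolding x(2)[symmetric] by auto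
  obtain A W where AW: "x = A @ nu # W" "filter (inner lo hi) A = U"
      "filter (inner lo hi) W = [] @ mu # R"
    using filter_eq_append_ConsD[of "inner lo hi" x U nu "mu # R"] x(2) by auto
  then obtain E B where EB: "W = E @ mu # B" "filter (inner lo hi) E = []"
      "filter (inner lo hi) B = R"
    using filter_eq_append_ConsD[OF AW(3)] by auto
  obtain r where "r \<in> set R"
    using assms(3) by (cases R) auto
  then have "r \<in> set (filter (inner lo hi) B)" "r \<le> mu"
    using EB(3) c' by auto
  then have r: "r \<in> set B" "lo < r" "r \<le> mu"
    by (auto simp: inner_def)
  have E: "set E \<subseteq> {lo, hi}"
    using no_inner_letters[OF _ EB(2)] x(1) AW(1) EB(1) by auto
  \<comment> \<open>After the rotation nothing below mu follows the lo-letters between nu and mu; so they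
    are first moved behind mu, with an inner letter of R as witness.\<close>
  define H where "H = filter (\<lambda>z. z \<noteq> lo) E"
  define L where "L = filter (\<lambda>z. z = lo) E"
  have "\<forall>e\<in>set (E @ [mu]). e \<noteq> lo \<longrightarrow> swappable lo e B"
    using E r numu by (auto intro!: swappable_by[of r])
  then have "(A @ [nu]) @ (E @ [mu]) @ B \<approx> (A @ [nu]) @ (H @ [mu]) @ L @ B"
    using partition_segment[of "E @ [mu]" "\<lambda>z. z \<noteq> lo" B "A @ [nu]"] numu
    by (simp add: H_def L_def)
  then have shift: "cyclic_shift x ((L @ B @ A) @ [nu] @ H @ [mu])"
    using taig_cong_cyclic_shift_left cyclic_shift_rotate[of "A @ [nu] @ H @ [mu]" "L @ B"] AW(1) EB(1)
    by simp
  have "set (L @ B @ A) \<subseteq> {lo..hi}" "\<forall>z\<in>set (L @ B @ A). inner lo hi z \<longrightarrow> nu \<le> z \<and> z \<le> mu"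
    "set H \<subseteq> {hi}" "filter (inner lo hi) (L @ B @ A) = R @ U"
    using x(1) bounds AW EB E numu by (auto simp: L_def H_def inner_def)
  then show "\<exists>i j. cyclic_shift x ((R @ U) @ replicate i hi @ replicate j lo @ [nu, mu])"
    using gather_outer_before_min_max[of "L @ B @ A" lo hi nu mu H] numu
      cyclic_shift_taig_cong_right[OF shift] by fastforce
qed

lemma exists_hub_shape_last_max:
  assumes "\<forall>z\<in>set c. inner lo hi z" "c \<noteq> []" "\<forall>z\<in>set c. z \<le> last c"
  shows "\<exists>R U. U \<noteq> [] \<and> hub_shape lo hi c R U"
proof -
  obtain c0 mu where c: "c = c0 @ [mu]"
    using assms(2) by (cases c rule: rev_cases) auto
  show ?thesis
  proof (cases "c0 = []")
    case True
    then show ?thesis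
      using hub_shape_singleton[of lo hi mu] assms(1) c by auto
  next
    case False
    define nu where "nu = Min (set c0)"
    have "nu \<in> set c0"
      using False by (simp add: nu_def)
    then obtain U0 R0 where "c0 = U0 @ nu # R0"
      by (meson split_list)
    then have "c = U0 @ nu # R0 @ [mu]"
      using c by simp
    moreover have "nu \<le> mu"
      using assms(3) c \<open>nu \<in> set c0\<close> by simp
    then have "\<forall>z\<in>set c. inner lo hi z \<and> nu \<le> z \<and> z \<le> mu"
      using assms(1,3) c by (simp add: nu_def)
    ultimately have "hub_shape lo hi c (R0 @ [mu]) (U0 @ [nu])"
      using hub_shape_last_max by blast
    then show ?thesis
      by blast
  qed
qed

lemma exists_hub_shape_last_min:
  assumes "\<forall>z\<in>set c. inner lo hi z" "c \<noteq> []" "\<forall>z\<in>set c. last c \<le> z"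
  shows "\<exists>R U. hub_shape lo hi c R U"
proof -
  let ?r = "reflect (lo + hi)"
  have le: "\<forall>z\<in>set c. z \<le> lo + hi"
    using assms(1) by (auto simp: inner_def)
  have "\<forall>z\<in>set (?r c). inner lo hi z" "?r c \<noteq> []" "\<forall>z\<in>set (?r c). z \<le> last (?r c)"
    using assms le inner_reflect by (auto simp: reflect_def last_map)
  then obtain R U where "U \<noteq> []" "hub_shape lo hi (?r c) R U"
    using exists_hub_shape_last_max by blast
  then have "hub_shape lo hi (?r (?r c)) (?r R) (?r U)"
    using hub_shape_reflect \<open>\<forall>z\<in>set (?r c). inner lo hi z\<close> by blast
  then show ?thesis
    using reflect_reflect[OF le] by auto
qed

lemma exists_hub_shape_last_between:
  assumes "\<forall>z\<in>set (c @ [rho]). inner lo hi z"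
    and "\<exists>z\<in>set c. z < rho" "\<exists>z\<in>set c. rho < z"
  shows "\<exists>R U. hub_shape lo hi (c @ [rho]) R U"
proof -
  define nu where "nu = Min (set (c @ [rho]))"
  define mu where "mu = Max (set (c @ [rho]))"
  have bounds: "\<forall>z\<in>set (c @ [rho]). inner lo hi z \<and> nu \<le> z \<and> z \<le> mu"
    using assms(1) by (simp add: nu_def mu_def)
  have "nu < rho" "rho < mu"
    using assms(2,3) bounds by force+
  moreover have "nu \<in> set (c @ [rho])" "mu \<in> set (c @ [rho])"
    unfolding nu_def mu_def by (rule Min_in Max_in, simp, simp)+
  ultimately obtain U R where "c @ [rho] \<approx> U @ [nu, mu] @ R" "rho \<in> set R"
    using min_max_adjacent[of nu c mu rho] by auto
  then show ?thesis
    using hub_shape_inner_last[OF bounds] by fastforce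
qed

lemma exists_hub_shape:
  assumes "lo < hi" "\<forall>z\<in>set c. inner lo hi z"
  shows "\<exists>R U. hub_shape lo hi c R U"
proof (cases c rule: rev_cases)
  case Nil
  then show ?thesis
    using hub_shape_no_inner[OF assms(1)] by blast
next
  case (snoc c0 rho)
  have "(\<forall>z\<in>set c. z \<le> rho) \<or> (\<forall>z\<in>set c. rho \<le> z)
      \<or> (\<exists>z\<in>set c0. z < rho) \<and> (\<exists>z\<in>set c0. rho < z)"
    using snoc by (simp add: not_le) (meson not_le)
  then consider "\<forall>z\<in>set c. z \<le> rho" | "\<forall>z\<in>set c. rho \<le> z"
    | "\<exists>z\<in>set c0. z < rho" "\<exists>z\<in>set c0. rho < z"
    by blast
  then show ?thesis
    using exists_hub_shape_last_max[OF assms(2)] exists_hub_shape_last_min[OF assms(2)]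
      exists_hub_shape_last_between[of c0 rho lo hi] assms(2) snoc
    by cases auto
qed

section \<open>Upper bound: paths between words with equal evaluation\<close>

lemma mset_eq_few_letters:
  assumes "card (set u) \<le> 1" "mset u = mset v"
  shows "u = v"
proof -
  obtain a where a: "\<forall>x\<in>set u. x = a"
    using assms(1) card_le_Suc0_iff_eq[of "set u"] by (cases u) auto
  moreover have "set v = set u" "length v = length u"
    using assms(2) by (metis set_mset_mset, metis size_mset)
  ultimately have "u = replicate (length u) a" "v = replicate (length u) a"
    by (auto intro!: replicate_eqI)
  then show ?thesis
    by metis
qed

lemma cyclic_shift_path_through_inner:
  assumes "lo < hi" "set u \<subseteq> {lo..hi}" "mset u = mset v"
    and "(cyclic_shift ^^ k) (filter (inner lo hi) u) (filter (inner lo hi) v)"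
  shows "(cyclic_shift ^^ Suc (Suc k)) u v"
proof -
  let ?cv = "filter (inner lo hi) v"
  obtain u' where u': "(cyclic_shift ^^ k) u u'" "set u' \<subseteq> {lo..hi}" "filter (inner lo hi) u' \<approx> ?cv"
    using lift_cyclic_shift_path[OF assms(4,2) taig_cong_refl] by blast
  obtain R U where hub: "hub_shape lo hi ?cv R U"
    using exists_hub_shape[OF assms(1), of ?cv] by auto
  have "mset u' = mset v" "set v \<subseteq> {lo..hi}"
    using cyclic_shift_path_mset[OF u'(1)] assms(2,3) by (simp, metis set_mset_mset)
  then obtain h where "cyclic_shift u' h" "cyclic_shift v h"
    using hub_shape_common_neighbour[OF assms(1) hub u'(2,3) _ taig_cong_refl] by blast
  then show ?thesis
    using u'(1) cyclic_shift_sym by (meson relpowp_Suc_I)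
qed

theorem mset_eq_cyclic_shift_path:
  "mset u = mset v \<Longrightarrow> (cyclic_shift ^^ card (set u)) u v"
proof (induction "card (set u)" arbitrary: u v rule: less_induct)
  case less
  show ?case
  proof (cases "card (set u) \<le> 1")
    case True
    then show ?thesis
      using mset_eq_few_letters less.prems cyclic_shift_path_refl by blast
  next
    case False
    define lo where "lo = Min (set u)"
    define hi where "hi = Max (set u)"
    have "set u \<noteq> {}"
      using False by auto
    then have lo_hi: "lo \<in> set u" "hi \<in> set u" "set u \<subseteq> {lo..hi}"
      by (auto simp: lo_def hi_def)
    have "lo \<noteq> hi"
      using False card_mono[of "{lo}" "set u"] lo_hi by auto
    then have "lo < hi"
      using lo_hi by auto
    have "set (filter (inner lo hi) u) = set u - {lo, hi}"
      using lo_hi by (auto simp: inner_def)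
    then have card: "Suc (Suc (card (set (filter (inner lo hi) u)))) = card (set u)"
      using lo_hi \<open>lo \<noteq> hi\<close> False by (simp add: card_Diff_subset)
    then have "card (set (filter (inner lo hi) u)) < card (set u)"
      by linarith
    moreover have "mset (filter (inner lo hi) u) = mset (filter (inner lo hi) v)"
      using less.prems by (simp add: mset_filter)
    ultimately have "(cyclic_shift ^^ card (set (filter (inner lo hi) u)))
        (filter (inner lo hi) u) (filter (inner lo hi) v)"
      by (rule less.hyps)
    then have "(cyclic_shift ^^ Suc (Suc (card (set (filter (inner lo hi) u))))) u v"
      by (rule cyclic_shift_path_through_inner[OF \<open>lo < hi\<close> lo_hi(3) less.prems])
    then show ?thesis
      unfolding card .
  qed
qed

section \<open>Lower bound: an invariant of permutations\<close>

primrec first_pos :: "nat \<Rightarrow> nat list \<Rightarrow> nat" where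
  "first_pos z [] = 0"
| "first_pos z (a # w) = (if a = z then 0 else Suc (first_pos z w))"

lemma first_pos_append:
  "first_pos z (u @ v) = (if z \<in> set u then first_pos z u else length u + first_pos z v)"
  by (induction u) auto

lemma first_pos_less_length: "z \<in> set u \<Longrightarrow> first_pos z u < length u"
  by (induction u) auto

definition inv_descent :: "nat list \<Rightarrow> nat \<Rightarrow> bool" where
  "inv_descent w i \<longleftrightarrow> first_pos (Suc (Suc i)) w < first_pos (Suc i) w"

definition inv_descents :: "nat \<Rightarrow> nat list \<Rightarrow> int" where
  "inv_descents n w = (\<Sum>i<n - 1. of_bool (inv_descent w i))"

lemma first_pos_swap_compare:
  assumes "distinct (p @ [x, y] @ q)" "b \<notin> {x, y}"
  shows "first_pos a (p @ [y, x] @ q) < first_pos b (p @ [y, x] @ q)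
      \<longleftrightarrow> first_pos a (p @ [x, y] @ q) < first_pos b (p @ [x, y] @ q)"
    and "first_pos b (p @ [y, x] @ q) < first_pos a (p @ [y, x] @ q)
      \<longleftrightarrow> first_pos b (p @ [x, y] @ q) < first_pos a (p @ [x, y] @ q)"
proof -
  let ?w = "p @ [x, y] @ q" and ?w' = "p @ [y, x] @ q" and ?P = "length p"
  have b: "first_pos b ?w' = first_pos b ?w" "first_pos b ?w \<noteq> ?P" "first_pos b ?w \<noteq> Suc ?P"
    using assms first_pos_less_length[of b p] by (auto simp: first_pos_append)
  have "first_pos a ?w' = first_pos a ?w
      \<or> first_pos a ?w \<in> {?P, Suc ?P} \<and> first_pos a ?w' \<in> {?P, Suc ?P}"
    using assms(1) by (auto simp: first_pos_append)
  with b show "first_pos a ?w' < first_pos b ?w' \<longleftrightarrow> first_pos a ?w < first_pos b ?w"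
    and "first_pos b ?w' < first_pos a ?w' \<longleftrightarrow> first_pos b ?w < first_pos a ?w"
    by auto
qed

lemma inv_descent_swap:
  assumes "distinct (p @ [x, y] @ q)" "y \<noteq> Suc x" "x \<noteq> Suc y"
  shows "inv_descent (p @ [y, x] @ q) i \<longleftrightarrow> inv_descent (p @ [x, y] @ q) i"
proof -
  have "Suc i \<notin> {x, y} \<or> Suc (Suc i) \<notin> {x, y}"
    using assms(2,3) by auto
  then show ?thesis
    unfolding inv_descent_def using first_pos_swap_compare[OF assms(1)] by blast
qed

lemma taig_cong_inv_descent:
  assumes "u \<approx> v" "distinct u"
  shows "inv_descent v i \<longleftrightarrow> inv_descent u i"
  using assms(1)[unfolded taig_cong_iff_swaps]
proof (induction rule: rtranclp_induct)
  case (step w w')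
  then obtain p x y q where w: "w = p @ [x, y] @ q" "w' = p @ [y, x] @ q" "swappable x y q"
    by (auto simp: swap_step_def)
  have "distinct w"
    using assms(2) step.hyps(1) taig_cong_iff_swaps taig_cong_mset
    by (metis mset_eq_imp_distinct_iff)
  then have d: "distinct (p @ [x, y] @ q)"
    using w(1) by simp
  then obtain b where "b \<in> set q" "min x y \<le> b" "b \<le> max x y"
    using w(3) by (auto simp: swappable_def)
  moreover have "b \<noteq> x" "b \<noteq> y"
    using d \<open>b \<in> set q\<close> by auto
  ultimately have "y \<noteq> Suc x" "x \<noteq> Suc y"
    by (auto simp: min_def max_def split: if_splits)
  then show ?case
    using inv_descent_swap[OF d] step.IH w by simp
qed simp

lemma taig_cong_inv_descents: "u \<approx> v \<Longrightarrow> distinct u \<Longrightarrow> inv_descents n v = inv_descents n u"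
  unfolding inv_descents_def by (simp add: taig_cong_inv_descent)

lemma inv_descent_rotate:
  assumes "distinct (x @ y)" "Suc i \<in> set (x @ y)" "Suc (Suc i) \<in> set (x @ y)"
  shows "of_bool (inv_descent (y @ x) i) - of_bool (inv_descent (x @ y) i)
    = (of_bool (Suc i \<in> set x) - of_bool (Suc (Suc i) \<in> set x) :: int)"
proof -
  have disj: "set x \<inter> set y = {}"
    using assms(1) by auto
  consider "Suc i \<in> set x" "Suc (Suc i) \<in> set x" | "Suc i \<in> set y" "Suc (Suc i) \<in> set y"
    | "Suc i \<in> set x" "Suc (Suc i) \<in> set y" | "Suc i \<in> set y" "Suc (Suc i) \<in> set x"
    using assms(2,3) by auto
  then show ?thesis
  proof cases
    case 3
    then have "first_pos (Suc i) x < length x" "first_pos (Suc (Suc i)) y < length y"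
      by (simp_all add: first_pos_less_length)
    then show ?thesis
      using 3 disj by (auto simp: inv_descent_def first_pos_append)
  next
    case 4
    then have "first_pos (Suc i) y < length y" "first_pos (Suc (Suc i)) x < length x"
      by (simp_all add: first_pos_less_length)
    then show ?thesis
      using 4 disj by (auto simp: inv_descent_def first_pos_append)
  qed (use disj in \<open>auto simp: inv_descent_def first_pos_append\<close>)
qed

lemma inv_descents_rotate:
  assumes "distinct (x @ y)" "set (x @ y) = {1..n}"
  shows "\<bar>inv_descents n (y @ x) - inv_descents n (x @ y)\<bar> \<le> 1"
proof -
  have "inv_descents n (y @ x) - inv_descents n (x @ y)
      = (\<Sum>i<n - 1. of_bool (Suc i \<in> set x) - of_bool (Suc (Suc i) \<in> set x))"
    unfolding inv_descents_def sum_subtractf[symmetric]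
    using assms by (intro sum.cong refl inv_descent_rotate) auto
  also have "\<dots> = of_bool (Suc 0 \<in> set x) - of_bool (Suc (n - 1) \<in> set x)"
    by (rule sum_lessThan_telescope')
  finally show ?thesis
    by simp
qed

lemma inv_descents_path:
  assumes "(cyclic_shift ^^ k) u v" "distinct u" "set u = {1..n}"
  shows "\<bar>inv_descents n v - inv_descents n u\<bar> \<le> k"
  using assms(1)
proof (induction k arbitrary: v)
  case (Suc k)
  then obtain w where w: "(cyclic_shift ^^ k) u w" "cyclic_shift w v"
    by (auto elim: relpowp_Suc_E)
  obtain x y where xy: "w \<approx> x @ y" "v \<approx> y @ x"
    using w(2) by (auto simp: cyclic_shift_def)
  have "mset (x @ y) = mset u"
    using cyclic_shift_path_mset[OF w(1)] taig_cong_mset[OF xy(1)] by simp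
  then have xy_perm: "distinct (x @ y)" "set (x @ y) = {1..n}"
    using assms(2,3) by (metis mset_eq_imp_distinct_iff, metis set_mset_mset)
  have "inv_descents n w = inv_descents n (x @ y)" "inv_descents n v = inv_descents n (y @ x)"
    using taig_cong_inv_descents[OF taig_cong_sym[OF xy(1)]] taig_cong_inv_descents[OF taig_cong_sym[OF xy(2)]]
      xy_perm by auto
  then show ?case
    using Suc.IH[OF w(1)] inv_descents_rotate[OF xy_perm] by simp
qed simp

lemma first_pos_upt: "a \<le> z \<Longrightarrow> z < b \<Longrightarrow> first_pos z [a..<b] = z - a"
  by (induction b) (auto simp: first_pos_append less_Suc_eq)

lemma first_pos_rev_upt: "a \<le> z \<Longrightarrow> z < b \<Longrightarrow> first_pos z (rev [a..<b]) = b - Suc z"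
  by (induction b) (auto simp: less_Suc_eq)

lemma inv_descents_upt: "inv_descents n [1..<Suc n] = 0"
proof -
  have "\<not> inv_descent [1..<Suc n] i" if "i < n - 1" for i
    using that by (simp add: inv_descent_def first_pos_upt del: upt_Suc)
  then show ?thesis
    by (simp add: inv_descents_def)
qed

lemma inv_descents_rev_upt: "inv_descents n (rev [1..<Suc n]) = int (n - 1)"
proof -
  have "inv_descent (rev [1..<Suc n]) i" if "i < n - 1" for i
    using that by (simp add: inv_descent_def first_pos_rev_upt del: upt_Suc)
  then show ?thesis
    by (simp add: inv_descents_def)
qed

section \<open>The cyclic shift graph of the taiga monoid\<close>

lemma taig_eq_imp_taig_cong: "taig_eq A u v \<Longrightarrow> u \<approx> v"
  unfolding taig_eq_def taig_cong_def symclp_def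
  by (rule rtranclp_mono[THEN predicate2D, rotated]) auto

lemma taig_cong_imp_taig_eq:
  assumes "u \<approx> v" "u \<in> lists A"
  shows "taig_eq A u v"
  using assms(1)[unfolded taig_cong_def]
proof (induction rule: rtranclp_induct)
  case (step w w')
  have "u \<approx> w" "u \<approx> w'"
    using step.hyps unfolding taig_cong_def by auto
  then have "w \<in> lists A" "w' \<in> lists A"
    using assms(2) taig_cong_set by auto
  then have "(\<lambda>x y. x \<in> lists A \<and> y \<in> lists A \<and> (taig_step x y \<or> taig_step y x)) w w'"
    using step.hyps(2) by (simp add: symclp_def)
  then show ?case
    using step.IH unfolding taig_eq_def by (rule rtranclp.rtrancl_into_rtrancl[rotated])
qed (simp add: taig_eq_def)

lemma cls_eq: "u \<in> lists A \<Longrightarrow> cls A u = {v. u \<approx> v}"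
proof (intro set_eqI iffI)
  fix v assume u: "u \<in> lists A" and "v \<in> {v. u \<approx> v}"
  then have "u \<approx> v"
    by simp
  moreover have "v \<in> lists A"
    using u taig_cong_set[OF \<open>u \<approx> v\<close>] unfolding in_lists_conv_set by simp
  ultimately show "v \<in> cls A u"
    using taig_cong_imp_taig_eq[OF _ u] by (simp add: cls_def)
qed (use taig_eq_imp_taig_cong in \<open>auto simp: cls_def\<close>)

lemma cls_eq_iff:
  assumes "u \<in> lists A" "v \<in> lists A"
  shows "cls A u = cls A v \<longleftrightarrow> u \<approx> v"
proof
  assume "cls A u = cls A v"
  then show "u \<approx> v"
    using cls_eq[OF assms(1)] cls_eq[OF assms(2)] taig_cong_refl by blast
next
  assume "u \<approx> v"
  then have "u \<approx> w \<longleftrightarrow> v \<approx> w" for w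
    using taig_cong_sym taig_cong_trans by metis
  then show "cls A u = cls A v"
    unfolding cls_eq[OF assms(1)] cls_eq[OF assms(2)] by auto
qed

lemma K_edge_iff:
  assumes "u \<in> lists A" "v \<in> lists A"
  shows "K_edge A (cls A u) (cls A v) \<longleftrightarrow> cyclic_shift u v"
proof
  assume "K_edge A (cls A u) (cls A v)"
  then obtain x y where "x \<in> lists A" "y \<in> lists A" "cls A u = cls A (x @ y)" "cls A v = cls A (y @ x)"
    unfolding K_edge_def by blast
  then show "cyclic_shift u v"
    using assms cls_eq_iff unfolding cyclic_shift_def by (metis append_in_lists_conv)
next
  assume "cyclic_shift u v"
  then obtain x y where xy: "u \<approx> x @ y" "v \<approx> y @ x"
    unfolding cyclic_shift_def by blast
  then have "x \<in> lists A" "y \<in> lists A"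
    using assms(1) taig_cong_set by auto
  then show "K_edge A (cls A u) (cls A v)"
    using xy assms cls_eq_iff unfolding K_edge_def by (metis append_in_lists_conv)
qed

lemma K_edge_path_imp_cyclic_shift_path:
  assumes "(K_edge A ^^ k) (cls A u) t" "u \<in> lists A"
  shows "\<exists>v\<in>lists A. t = cls A v \<and> (cyclic_shift ^^ k) u v"
  using assms(1)
proof (induction k arbitrary: t)
  case (Suc k)
  then obtain s where s: "(K_edge A ^^ k) (cls A u) s" "K_edge A s t"
    by (auto elim: relpowp_Suc_E)
  then obtain w where w: "w \<in> lists A" "s = cls A w" "(cyclic_shift ^^ k) u w"
    using Suc.IH by blast
  obtain x y where "x \<in> lists A" "y \<in> lists A" "s = cls A (x @ y)" "t = cls A (y @ x)"
    using s(2) unfolding K_edge_def by blast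
  moreover from this have "cyclic_shift w (y @ x)"
    using K_edge_iff[OF w(1)] s(2) w(2) by simp
  ultimately show ?case
    using w(3) by (intro bexI[of _ "y @ x"]) (auto intro: relpowp_Suc_I)
qed (use assms in auto)

lemma cyclic_shift_path_imp_K_edge_path:
  assumes "(cyclic_shift ^^ k) u v" "u \<in> lists A"
  shows "(K_edge A ^^ k) (cls A u) (cls A v)"
  using assms(1)
proof (induction k arbitrary: v)
  case (Suc k)
  then obtain w where w: "(cyclic_shift ^^ k) u w" "cyclic_shift w v"
    by (auto elim: relpowp_Suc_E)
  have "set w = set u" "set v = set u"
    using cyclic_shift_path_mset[OF w(1)] cyclic_shift_mset[OF w(2)] by (metis set_mset_mset)+
  then have "K_edge A (cls A w) (cls A v)"
    using K_edge_iff w(2) assms(2) by (simp add: in_lists_conv_set)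
  then show ?case
    using Suc.IH[OF w(1)] by (auto intro: relpowp_Suc_I)
qed simp

lemma K_conn_iff_mset:
  assumes "u \<in> lists A" "v \<in> lists A"
  shows "K_conn A (cls A u) (cls A v) \<longleftrightarrow> mset u = mset v"
proof
  assume "K_conn A (cls A u) (cls A v)"
  then obtain k where "(K_edge A ^^ k) (cls A u) (cls A v)"
    unfolding K_conn_def by (metis rtranclp_imp_relpowp)
  then obtain v' where "v' \<in> lists A" "cls A v = cls A v'" "(cyclic_shift ^^ k) u v'"
    using K_edge_path_imp_cyclic_shift_path assms(1) by blast
  then show "mset u = mset v"
    using cls_eq_iff assms(2) cyclic_shift_path_mset taig_cong_mset by metis
next
  assume "mset u = mset v"
  then have "(K_edge A ^^ card (set u)) (cls A u) (cls A v)"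
    using cyclic_shift_path_imp_K_edge_path[OF mset_eq_cyclic_shift_path assms(1)] by blast
  then show "K_conn A (cls A u) (cls A v)"
    unfolding K_conn_def by (rule relpowp_imp_rtranclp)
qed

lemma K_dist_le:
  assumes "(K_edge A ^^ k) s t"
  shows "K_dist A s t \<le> enat k"
  using assms Least_le[of "\<lambda>k. (K_edge A ^^ k) s t" k] by (auto simp: K_dist_def)

lemma comp_diam_le_card:
  assumes "finite A" "s \<in> K_vert A"
  shows "comp_diam A s \<le> enat (card A)"
  unfolding comp_diam_def
proof (rule SUP_least, clarify)
  fix t t' assume conn: "K_conn A s t" "K_conn A s t'"
  obtain w where w: "w \<in> lists A" "s = cls A w"
    using assms(2) unfolding K_vert_def by blast
  obtain v v' where "v \<in> lists A" "t = cls A v" "v' \<in> lists A" "t' = cls A v'"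
    "mset v = mset v'"
    using conn w K_edge_path_imp_cyclic_shift_path cyclic_shift_path_mset
    unfolding K_conn_def by (metis rtranclp_imp_relpowp)
  moreover from this have "card (set v) \<le> card A"
    using assms(1) by (simp add: card_mono in_lists_conv_set subsetI)
  ultimately show "K_dist A (fst (t, t')) (snd (t, t')) \<le> enat (card A)"
    using K_dist_le[OF cyclic_shift_path_imp_K_edge_path[OF mset_eq_cyclic_shift_path]]
    by (metis fst_conv snd_conv enat_ord_simps(1) order_trans)
qed

lemma K_dist_identity_reverse:
  "enat (n - 1) \<le> K_dist (Alph_n n) (cls (Alph_n n) [1..<Suc n]) (cls (Alph_n n) (rev [1..<Suc n]))"
proof -
  let ?A = "Alph_n n" and ?e = "[1..<Suc n]"
  have e: "?e \<in> lists ?A" "rev ?e \<in> lists ?A" "distinct ?e" "set ?e = {1..n}"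
    by (auto simp: Alph_n_def)
  have "n - 1 \<le> k" if path: "(K_edge ?A ^^ k) (cls ?A ?e) (cls ?A (rev ?e))" for k
  proof -
    obtain v where "v \<in> lists ?A" "cls ?A (rev ?e) = cls ?A v" "(cyclic_shift ^^ k) ?e v"
      using K_edge_path_imp_cyclic_shift_path[OF path e(1)] by blast
    moreover from this have "v \<approx> rev ?e" "distinct v"
      using cls_eq_iff e taig_cong_sym cyclic_shift_path_mset mset_eq_imp_distinct_iff
      by metis+
    ultimately show ?thesis
      using inv_descents_path[of k ?e v n] taig_cong_inv_descents[of v "rev ?e" n] e
        inv_descents_upt inv_descents_rev_upt by simp
  qed
  then show ?thesis
    unfolding K_dist_def by (auto intro: LeastI2_ex)
qed

lemma comp_diam_identity:
  "enat (n - 1) \<le> comp_diam (Alph_n n) (cls (Alph_n n) [1..<Suc n])"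
proof -
  let ?A = "Alph_n n" and ?e = "[1..<Suc n]"
  have "?e \<in> lists ?A" "rev ?e \<in> lists ?A"
    by (auto simp: Alph_n_def)
  then have "K_conn ?A (cls ?A ?e) (cls ?A ?e)" "K_conn ?A (cls ?A ?e) (cls ?A (rev ?e))"
    using K_conn_iff_mset by auto
  then show ?thesis
    unfolding comp_diam_def using K_dist_identity_reverse
    by (intro SUP_upper2[of "(cls ?A ?e, cls ?A (rev ?e))"]) auto
qed

lemma enat_between_pred: "enat (n - 1) \<le> x \<Longrightarrow> x \<le> enat n \<Longrightarrow> x \<in> {enat (n - 1), enat n}"
  by (cases x) auto

theorem mainTheorem5:
  shows "(\<forall>u \<in> lists Alph. \<forall>v \<in> lists Alph.
            K_conn Alph (cls Alph u) (cls Alph v) \<longleftrightarrow> mset u = mset v)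
       \<and> (\<forall>n::nat. n \<ge> 1 \<longrightarrow>
            (\<forall>s \<in> K_vert (Alph_n n). comp_diam (Alph_n n) s \<le> enat n)
          \<and> (\<exists>s \<in> K_vert (Alph_n n). comp_diam (Alph_n n) s \<ge> enat (n - 1))
          \<and> (SUP s \<in> K_vert (Alph_n n). comp_diam (Alph_n n) s) \<in> {enat (n - 1), enat n})"
proof (intro conjI ballI allI impI)
  fix u v assume "u \<in> lists Alph" "v \<in> lists Alph"
  then show "K_conn Alph (cls Alph u) (cls Alph v) \<longleftrightarrow> mset u = mset v"
    by (rule K_conn_iff_mset)
next
  fix n :: nat
  have upper: "comp_diam (Alph_n n) s \<le> enat n" if "s \<in> K_vert (Alph_n n)" for s
    using comp_diam_le_card[OF _ that] by (simp add: Alph_n_def)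
  then show "comp_diam (Alph_n n) s \<le> enat n" if "s \<in> K_vert (Alph_n n)" for s
    using that .
  have "[1..<Suc n] \<in> lists (Alph_n n)"
    by (auto simp: Alph_n_def)
  then have identity: "cls (Alph_n n) [1..<Suc n] \<in> K_vert (Alph_n n)"
    unfolding K_vert_def by blast
  then show "\<exists>s \<in> K_vert (Alph_n n). comp_diam (Alph_n n) s \<ge> enat (n - 1)"
    using comp_diam_identity by blast
  show "(SUP s \<in> K_vert (Alph_n n). comp_diam (Alph_n n) s) \<in> {enat (n - 1), enat n}"
    using upper comp_diam_identity SUP_upper2[OF identity]
    by (intro enat_between_pred SUP_least) auto
qed

end
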